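(* Let $w\in S_n$ and $1\le p<q\le n$, and let $\mathcal{S}_{w,pq}=K_{pq}.F_w\subset Fl_n(\mathbb{H})$, where $F_w=(\mathbb{H}e_{w(1)},\ldots,\mathbb{H}e_{w(n)})$. The group $G=(\mathbb{H}^* )^n=\{\mathrm{Diag}(\gamma_1,\ldots,\gamma_n):\gamma_\nu\in\mathbb{H}\setminus\{0\}\}$ acts transitively on the complement in $\mathcal{S}_{w,pq}$ of its two $K$-fixed points $F_w$ and $F_{s_{pq}w}$, and there is a point of this complement whose stabilizer in $G$ is $G_{pq}=\{(\gamma_1,\ldots,\gamma_n)\in G:\gamma_p=\gamma_q\}$.
   Context: $\mathbb{H}^n$ is a left $\mathbb{H}$-module with standard basis $e_1,\ldots,e_n$ and inner product $(h,k)=\sum_\nu h_\nu\bar k_\nu$; an invertible matrix $B$ acts $\mathbb{H}$-linearly by $h\mapsto h\cdot B^*$, hence acts on $Fl_n(\mathbb{H})$, the manifold of complete flags $V_1\subset\cdots\subset V_n$ of left $\mathbb{H}$-submodules with $\dim V_\nu=\nu$ (a flag given by mutually orthogonal lines $(L_1,\ldots,L_n)$ corresponds to $V_\nu=L_1\oplus\cdots\oplus L_\nu$). $K=Sp(1)^n$ is the diagonal subgroup of $Sp(n)=\{B:BB^*=I\}$; $K_{pq}\subset Sp(n)$ is the subgroup of matrices whose entries vanish except on the diagonal and at positions $(p,q)$, $(q,p)$. $s_{pq}$ is the transposition of $p,q$. *)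

theory Defs
  imports Complex_Main "HOL-Combinatorics.Permutations" "HOL-Combinatorics.Transposition"
begin

datatype quat = Quat (qre: real) (qi: real) (qj: real) (qk: real)

instantiation quat :: ring_1
begin
definition "0 = Quat 0 0 0 0"
definition "1 = Quat 1 0 0 0"
definition "x + y = Quat (qre x + qre y) (qi x + qi y) (qj x + qj y) (qk x + qk y)"
definition "x - y = Quat (qre x - qre y) (qi x - qi y) (qj x - qj y) (qk x - qk y)"
definition "- x = Quat (- qre x) (- qi x) (- qj x) (- qk x)"
definition "x * y = Quat
   (qre x * qre y - qi x * qi y - qj x * qj y - qk x * qk y)
   (qre x * qi y + qi x * qre y + qj x * qk y - qk x * qj y)
   (qre x * qj y - qi x * qk y + qj x * qre y + qk x * qi y)
   (qre x * qk y + qi x * qj y - qj x * qi y + qk x * qre y)"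
instance
  by standard (simp_all add: zero_quat_def one_quat_def plus_quat_def minus_quat_def
      uminus_quat_def times_quat_def algebra_simps)
end

definition qcnj :: "quat \<Rightarrow> quat" where
  "qcnj x = Quat (qre x) (- qi x) (- qj x) (- qk x)"

section \<open>The left H-module H^n (vectors indexed by 1..n, zero elsewhere)\<close>

type_synonym qvec = "nat \<Rightarrow> quat"
type_synonym qmat = "nat \<Rightarrow> nat \<Rightarrow> quat"

definition Hvec :: "nat \<Rightarrow> qvec set" where
  "Hvec n = {x. \<forall>i. i \<notin> {1..n} \<longrightarrow> x i = 0}"

definition evec :: "nat \<Rightarrow> qvec" where
  "evec j = (\<lambda>i. if i = j then 1 else 0)"

definition lscale :: "quat \<Rightarrow> qvec \<Rightarrow> qvec" where
  "lscale c h = (\<lambda>i. c * h i)"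

definition lcomb :: "(nat \<Rightarrow> quat) \<Rightarrow> qvec list \<Rightarrow> qvec" where
  "lcomb c vs = (\<lambda>i. \<Sum>k<length vs. c k * (vs ! k) i)"

definition hspan :: "qvec list \<Rightarrow> qvec set" where
  "hspan vs = {lcomb c vs | c. True}"

definition hindep :: "qvec list \<Rightarrow> bool" where
  "hindep vs \<longleftrightarrow> (\<forall>c. lcomb c vs = (\<lambda>i. 0) \<longrightarrow> (\<forall>k<length vs. c k = 0))"

definition hsubmod_dim :: "nat \<Rightarrow> qvec set \<Rightarrow> nat \<Rightarrow> bool" where
  "hsubmod_dim n V d \<longleftrightarrow> V \<subseteq> Hvec n \<and>
     (\<exists>vs. length vs = d \<and> set vs \<subseteq> V \<and> hindep vs \<and> hspan vs = V)"

text \<open>A flag is encoded as the family nu |-> V_nu for nu in 1..n (empty set elsewhere).\<close>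
type_synonym qflag = "nat \<Rightarrow> qvec set"

definition Fl :: "nat \<Rightarrow> qflag set" where
  "Fl n = {V. (\<forall>\<nu>\<in>{1..n}. hsubmod_dim n (V \<nu>) \<nu>)
            \<and> (\<forall>\<nu>\<in>{1..<n}. V \<nu> \<subseteq> V (Suc \<nu>))
            \<and> (\<forall>\<nu>. \<nu> \<notin> {1..n} \<longrightarrow> V \<nu> = {})}"

definition flag_of_lines :: "nat \<Rightarrow> (nat \<Rightarrow> qvec set) \<Rightarrow> qflag" where
  "flag_of_lines n L = (\<lambda>\<nu>. if \<nu> \<in> {1..n}
       then {(\<lambda>i. \<Sum>k\<in>{1..\<nu>}. x k i) | x. \<forall>k\<in>{1..\<nu>}. x k \<in> L k} else {})"

definition Hline :: "nat \<Rightarrow> qvec set" where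
  "Hline j = {lscale c (evec j) | c. True}"

definition Fw :: "nat \<Rightarrow> (nat \<Rightarrow> nat) \<Rightarrow> qflag" where
  "Fw n w = flag_of_lines n (\<lambda>\<nu>. Hline (w \<nu>))"

definition is_qmat :: "nat \<Rightarrow> qmat \<Rightarrow> bool" where
  "is_qmat n B \<longleftrightarrow> (\<forall>i j. i \<notin> {1..n} \<or> j \<notin> {1..n} \<longrightarrow> B i j = 0)"

definition adj :: "qmat \<Rightarrow> qmat" where
  "adj B = (\<lambda>i j. qcnj (B j i))"

definition mmul :: "nat \<Rightarrow> qmat \<Rightarrow> qmat \<Rightarrow> qmat" where
  "mmul n A B = (\<lambda>i j. \<Sum>k\<in>{1..n}. A i k * B k j)"

definition idm :: "nat \<Rightarrow> qmat" where
  "idm n = (\<lambda>i j. if i = j \<and> i \<in> {1..n} then 1 else 0)"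

definition vmul :: "nat \<Rightarrow> qvec \<Rightarrow> qmat \<Rightarrow> qvec" where
  "vmul n h A = (\<lambda>j. if j \<in> {1..n} then \<Sum>i\<in>{1..n}. h i * A i j else 0)"

definition flag_act :: "nat \<Rightarrow> qmat \<Rightarrow> qflag \<Rightarrow> qflag" where
  "flag_act n B V = (\<lambda>\<nu>. (\<lambda>h. vmul n h (adj B)) ` V \<nu>)"

definition Sp :: "nat \<Rightarrow> qmat set" where
  "Sp n = {B. is_qmat n B \<and> mmul n B (adj B) = idm n}"

definition Diag :: "nat \<Rightarrow> (nat \<Rightarrow> quat) \<Rightarrow> qmat" where
  "Diag n \<gamma> = (\<lambda>i j. if i = j \<and> i \<in> {1..n} then \<gamma> i else 0)"

definition Kgrp :: "nat \<Rightarrow> qmat set" where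
  "Kgrp n = {B \<in> Sp n. \<forall>i j. i \<noteq> j \<longrightarrow> B i j = 0}"

definition Kpq :: "nat \<Rightarrow> nat \<Rightarrow> nat \<Rightarrow> qmat set" where
  "Kpq n p q = {B \<in> Sp n. \<forall>i j. i \<noteq> j \<and> (i, j) \<noteq> (p, q) \<and> (i, j) \<noteq> (q, p) \<longrightarrow> B i j = 0}"

definition Ggrp :: "nat \<Rightarrow> qmat set" where
  "Ggrp n = {Diag n \<gamma> | \<gamma>. \<forall>\<nu>\<in>{1..n}. \<gamma> \<nu> \<noteq> 0}"

definition Gpq :: "nat \<Rightarrow> nat \<Rightarrow> nat \<Rightarrow> qmat set" where
  "Gpq n p q = {Diag n \<gamma> | \<gamma>. (\<forall>\<nu>\<in>{1..n}. \<gamma> \<nu> \<noteq> 0) \<and> \<gamma> p = \<gamma> q}"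

definition Swpq :: "nat \<Rightarrow> (nat \<Rightarrow> nat) \<Rightarrow> nat \<Rightarrow> nat \<Rightarrow> qflag set" where
  "Swpq n w p q = (\<lambda>B. flag_act n B (Fw n w)) ` Kpq n p q"

end

theory Submission
  imports Defs
begin

(* Put i = w^-1(p) < j = w^-1(q). A matrix B in K_pq acts on the p-th and q-th coordinates
   through its unitary 2x2 block and on the others by unit scalars, so B.F_w only depends on
   the point [a : b] = [conj B_pp : conj B_qp] of the quaternionic projective line: it is the
   flag obtained from F_w by replacing e_p with a e_p + b e_q in the steps i <= nu < j. As K_pq
   is transitive on HP^1, S_{w,pq} is this projective line, with F_w = [1 : 0] and
   F_{s_pq w} = [0 : 1]. The diagonal matrix Diag(gamma) acts by
   [a : b] |-> [a conj gamma_p : b conj gamma_q], which is transitive on the points with a, b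
   nonzero, the stabilizer of [1 : 1] being gamma_p = gamma_q; the reflection of the q-th
   coordinate lies in K and sends [a : b] to [a : -b], so [1 : 0] and [0 : 1] are the only
   K-fixed points. *)

section \<open>Quaternions\<close>

definition quat_of_real :: "real \<Rightarrow> quat" where
  "quat_of_real r = Quat r 0 0 0"

definition qnorm :: "quat \<Rightarrow> real" where
  "qnorm x = qre x ^ 2 + qi x ^ 2 + qj x ^ 2 + qk x ^ 2"

lemmas quat_ops_defs = zero_quat_def one_quat_def plus_quat_def minus_quat_def
  uminus_quat_def times_quat_def qcnj_def quat_of_real_def

lemma qnorm_nonneg: "0 \<le> qnorm x"
  by (simp add: qnorm_def)

lemma qnorm_pos: "x \<noteq> 0 \<Longrightarrow> 0 < qnorm x"
  by (cases x) (auto simp: qnorm_def zero_quat_def add_pos_nonneg add_nonneg_pos)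

lemma mult_qcnj_self: "x * qcnj x = quat_of_real (qnorm x)"
  by (simp add: quat_ops_defs qnorm_def power2_eq_square algebra_simps)

lemma qcnj_mult_self: "qcnj x * x = quat_of_real (qnorm x)"
  by (simp add: quat_ops_defs qnorm_def power2_eq_square algebra_simps)

lemma quat_of_real_commute: "quat_of_real r * x = x * quat_of_real r"
  by (simp add: quat_ops_defs)

lemma quat_of_real_mult: "quat_of_real r * quat_of_real s = quat_of_real (r * s)"
  by (simp add: quat_ops_defs)

lemma quat_of_real_1 [simp]: "quat_of_real 1 = 1"
  by (simp add: quat_ops_defs)

lemma quat_of_real_eq_0_iff [simp]: "quat_of_real r = 0 \<longleftrightarrow> r = 0"
  by (simp add: quat_ops_defs)

instantiation quat :: division_ring
begin

definition inverse_quat :: "quat \<Rightarrow> quat" where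
  "inverse_quat x = quat_of_real (inverse (qnorm x)) * qcnj x"

definition divide_quat :: "quat \<Rightarrow> quat \<Rightarrow> quat" where
  "divide_quat x y = x * inverse y"

instance
proof
  fix x y :: quat
  assume "x \<noteq> 0"
  then have "inverse (qnorm x) * qnorm x = 1" "qnorm x * inverse (qnorm x) = 1"
    using qnorm_pos[of x] by simp_all
  then show "inverse x * x = 1" "x * inverse x = 1"
    unfolding inverse_quat_def
    by (metis mult.assoc qcnj_mult_self quat_of_real_mult quat_of_real_1,
        metis mult.assoc mult_qcnj_self quat_of_real_mult quat_of_real_1 quat_of_real_commute)
qed (simp_all add: divide_quat_def inverse_quat_def quat_ops_defs)
end

lemma qcnj_qcnj [simp]: "qcnj (qcnj x) = x"
  by (cases x) (simp add: qcnj_def)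

lemma qcnj_mult: "qcnj (x * y) = qcnj y * qcnj x"
  by (simp add: quat_ops_defs algebra_simps)

lemma qcnj_add: "qcnj (x + y) = qcnj x + qcnj y"
  by (simp add: quat_ops_defs)

lemma qcnj_minus: "qcnj (- x) = - qcnj x"
  by (simp add: quat_ops_defs)

lemma qcnj_0 [simp]: "qcnj 0 = 0"
  by (simp add: quat_ops_defs)

lemma qcnj_1 [simp]: "qcnj 1 = 1"
  by (simp add: quat_ops_defs)

lemma qcnj_eq_0_iff [simp]: "qcnj x = 0 \<longleftrightarrow> x = 0"
  by (cases x) (auto simp: quat_ops_defs)

lemma qcnj_quat_of_real [simp]: "qcnj (quat_of_real r) = quat_of_real r"
  by (simp add: quat_ops_defs)

lemma qcnj_orthogonal_sym: "a * qcnj c + b * qcnj d = 0 \<Longrightarrow> c * qcnj a + d * qcnj b = 0"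
  by (metis qcnj_0 qcnj_add qcnj_mult qcnj_qcnj)

lemma quat_eq_uminus_iff: "(x :: quat) = - x \<longleftrightarrow> x = 0"
  by (cases x) (auto simp: quat_ops_defs)

section \<open>Coordinate subspaces and matrices supported on the diagonal and the (p, q) entries\<close>

definition coord_subspace :: "nat set \<Rightarrow> qvec set" where
  "coord_subspace A = {x. \<forall>k. k \<notin> A \<longrightarrow> x k = 0}"

lemma Fw_eq_coord_subspace:
  assumes "inj_on w {1..\<nu>}" and "\<nu> \<in> {1..n}"
  shows "Fw n w \<nu> = coord_subspace (w ` {1..\<nu>})"
proof -
  have Fw: "Fw n w \<nu> = {(\<lambda>i. \<Sum>k\<in>{1..\<nu>}. x k i) | x. \<forall>k\<in>{1..\<nu>}. x k \<in> Hline (w k)}"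
    using assms(2) by (simp add: Fw_def flag_of_lines_def)
  show ?thesis
  proof (intro equalityI subsetI)
    fix h assume "h \<in> Fw n w \<nu>"
    then obtain x where h: "h = (\<lambda>i. \<Sum>k\<in>{1..\<nu>}. x k i)" and x: "\<forall>k\<in>{1..\<nu>}. x k \<in> Hline (w k)"
      unfolding Fw by blast
    have "x k i = 0" if k: "k \<in> {1..\<nu>}" and i: "i \<notin> w ` {1..\<nu>}" for k i
    proof -
      obtain c where "x k = lscale c (evec (w k))"
        using x k unfolding Hline_def by blast
      moreover have "i \<noteq> w k"
        using k i by blast
      ultimately show ?thesis
        by (simp add: lscale_def evec_def)
    qed
    then show "h \<in> coord_subspace (w ` {1..\<nu>})"
      unfolding h coord_subspace_def by simp
  next
    fix h assume h: "h \<in> coord_subspace (w ` {1..\<nu>})"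
    let ?x = "\<lambda>k. lscale (h (w k)) (evec (w k))"
    have "(\<Sum>k\<in>{1..\<nu>}. ?x k i) = (\<Sum>k\<in>{1..\<nu>}. (\<lambda>m. if m = i then h m else 0) (w k))" for i
      by (rule sum.cong) (auto simp: lscale_def evec_def)
    also have "\<dots> i = (\<Sum>m\<in>w ` {1..\<nu>}. if m = i then h m else 0)" for i
      by (simp only: sum.reindex[OF assms(1)] o_def)
    also have "\<dots> i = h i" for i
      using h by (simp add: coord_subspace_def)
    finally have "h = (\<lambda>i. \<Sum>k\<in>{1..\<nu>}. ?x k i)"
      by simp
    moreover have "\<forall>k\<in>{1..\<nu>}. ?x k \<in> Hline (w k)"
      by (auto simp: Hline_def)
    ultimately show "h \<in> Fw n w \<nu>"
      unfolding Fw by (intro CollectI exI[of _ ?x]) blast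
  qed
qed

lemma Fw_outside: "\<nu> \<notin> {1..n} \<Longrightarrow> Fw n w \<nu> = {}"
  unfolding Fw_def flag_of_lines_def by auto

definition pq_line :: "nat \<Rightarrow> nat \<Rightarrow> quat \<Rightarrow> quat \<Rightarrow> qvec set" where
  "pq_line p q a b = {x. \<exists>c. x p = c * a \<and> x q = c * b}"

lemma pq_line_scale:
  assumes "t \<noteq> 0"
  shows "pq_line p q (t * a) (t * b) = pq_line p q a b"
proof (intro equalityI subsetI)
  fix x assume "x \<in> pq_line p q (t * a) (t * b)"
  then obtain c where "x p = (c * t) * a" "x q = (c * t) * b"
    by (auto simp: pq_line_def mult.assoc)
  then show "x \<in> pq_line p q a b"
    by (auto simp: pq_line_def)
next
  fix x assume "x \<in> pq_line p q a b"
  moreover have "inverse t * (t * y) = y" for y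
    using assms by (simp flip: mult.assoc)
  ultimately obtain c where "x p = (c * inverse t) * (t * a)" "x q = (c * inverse t) * (t * b)"
    by (auto simp: pq_line_def mult.assoc)
  then show "x \<in> pq_line p q (t * a) (t * b)"
    by (auto simp: pq_line_def)
qed

definition pq_shaped :: "nat \<Rightarrow> nat \<Rightarrow> nat \<Rightarrow> qmat \<Rightarrow> bool" where
  "pq_shaped n p q B \<longleftrightarrow> is_qmat n B \<and>
     (\<forall>i j. i \<noteq> j \<and> (i, j) \<noteq> (p, q) \<and> (i, j) \<noteq> (q, p) \<longrightarrow> B i j = 0)"

lemma Kpq_iff: "B \<in> Kpq n p q \<longleftrightarrow> B \<in> Sp n \<and> pq_shaped n p q B"
  by (auto simp: Kpq_def Sp_def pq_shaped_def)

lemma pq_shaped_Diag: "pq_shaped n p q (Diag n \<gamma>)"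
  by (simp add: pq_shaped_def is_qmat_def Diag_def)

lemma vmul_adj_pq_shaped:
  assumes "pq_shaped n p q B" and "p \<in> {1..n}" and "q \<in> {1..n}" and "p \<noteq> q"
  shows "vmul n x (adj B) k =
    (if k \<notin> {1..n} then 0
     else if k = p then x p * qcnj (B p p) + x q * qcnj (B p q)
     else if k = q then x p * qcnj (B q p) + x q * qcnj (B q q)
     else x k * qcnj (B k k))"
proof (cases "k \<in> {1..n}")
  case k: True
  let ?S = "if k = p \<or> k = q then {p, q} else {k}"
  have "vmul n x (adj B) k = (\<Sum>i\<in>{1..n}. x i * qcnj (B k i))"
    using k by (simp add: vmul_def adj_def)
  also have "\<dots> = (\<Sum>i\<in>?S. x i * qcnj (B k i))"
    using k assms by (intro sum.mono_neutral_right) (auto simp: pq_shaped_def)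
  finally show ?thesis
    using k assms(4) by auto
qed (auto simp: vmul_def)

lemma mmul_adj_pq_shaped:
  assumes "pq_shaped n p q B" and "p \<in> {1..n}" and "q \<in> {1..n}" and "p \<noteq> q"
    and "i \<in> {1..n}" and "j \<in> {1..n}"
  shows "mmul n B (adj B) i j =
    (if i \<in> {p, q} \<and> j \<in> {p, q} then B i p * qcnj (B j p) + B i q * qcnj (B j q)
     else if i = j then B i i * qcnj (B i i) else 0)"
proof -
  have off: "B k l = 0" if "k \<noteq> l" "(k, l) \<noteq> (p, q)" "(k, l) \<noteq> (q, p)" for k l
    using assms(1) that by (simp add: pq_shaped_def)
  let ?S = "if i = p \<or> i = q then {p, q} else {i}"
  have "mmul n B (adj B) i j = (\<Sum>k\<in>?S. B i k * qcnj (B j k))"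
    unfolding mmul_def adj_def
  proof (rule sum.mono_neutral_right)
    show "\<forall>k\<in>{1..n} - ?S. B i k * qcnj (B j k) = 0"
      using off by auto
  qed (use assms in auto)
  then show ?thesis
    using assms(4) by (auto simp: off)
qed

lemma pq_shaped_in_Sp_iff:
  assumes "pq_shaped n p q B" and "p \<in> {1..n}" and "q \<in> {1..n}" and "p \<noteq> q"
  shows "B \<in> Sp n \<longleftrightarrow> (\<forall>k\<in>{1..n}. k \<noteq> p \<and> k \<noteq> q \<longrightarrow> B k k * qcnj (B k k) = 1)
    \<and> B p p * qcnj (B p p) + B p q * qcnj (B p q) = 1
    \<and> B q p * qcnj (B q p) + B q q * qcnj (B q q) = 1
    \<and> B p p * qcnj (B q p) + B p q * qcnj (B q q) = 0"
    (is "_ \<longleftrightarrow> ?diag \<and> ?pp \<and> ?qq \<and> ?pq")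
proof -
  let ?M = "mmul n B (adj B)"
  note M = mmul_adj_pq_shaped[OF assms]
  have qmat: "is_qmat n B"
    using assms(1) by (simp add: pq_shaped_def)
  have outside: "?M i j = idm n i j" if "i \<notin> {1..n} \<or> j \<notin> {1..n}" for i j
  proof -
    have zero: "B i k * qcnj (B j k) = 0" for k
      using qmat that unfolding is_qmat_def by auto
    show ?thesis
      unfolding mmul_def adj_def idm_def using that by (auto simp: zero)
  qed
  show ?thesis
  proof
    assume "B \<in> Sp n"
    then have I: "?M i j = idm n i j" for i j
      by (simp add: Sp_def)
    have "?diag"
    proof (intro ballI impI)
      fix k assume "k \<in> {1..n}" "k \<noteq> p \<and> k \<noteq> q"
      then show "B k k * qcnj (B k k) = 1"
        using I[of k k] M[of k k] by (simp add: idm_def)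
    qed
    moreover have "?pp" "?qq" "?pq"
      using I[of p p] I[of q q] I[of p q] M[of p p] M[of q q] M[of p q] assms(2-4)
      by (simp_all add: idm_def)
    ultimately show "?diag \<and> ?pp \<and> ?qq \<and> ?pq"
      by blast
  next
    assume "?diag \<and> ?pp \<and> ?qq \<and> ?pq"
    then have diag: "?diag" and pp: "?pp" and qq: "?qq" and pq: "?pq"
      by blast+
    from pq have qp: "B q p * qcnj (B p p) + B q q * qcnj (B p q) = 0"
      by (rule qcnj_orthogonal_sym)
    have "?M i j = idm n i j" if "i \<in> {1..n}" "j \<in> {1..n}" for i j
    proof -
      consider "i = p" "j = p" | "i = q" "j = q" | "i = p" "j = q" | "i = q" "j = p"
        | "\<not> (i \<in> {p, q} \<and> j \<in> {p, q})"
        by blast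
      then show ?thesis
        using M[OF that] that diag pp qq pq qp assms(4)
        by cases (auto simp: idm_def)
    qed
    then have "?M i j = idm n i j" for i j
      using outside by blast
    then show "B \<in> Sp n"
      using qmat by (simp add: Sp_def fun_eq_iff)
  qed
qed

lemma vmul_adj_pq_shaped_lift:
  assumes "pq_shaped n p q B" and "p \<in> {1..n}" and "q \<in> {1..n}" and "p \<noteq> q"
    and "\<forall>k\<in>{1..n}. k \<noteq> p \<and> k \<noteq> q \<longrightarrow> B k k \<noteq> 0"
    and "y \<in> Hvec n"
    and "xp * qcnj (B p p) + xq * qcnj (B p q) = y p"
    and "xp * qcnj (B q p) + xq * qcnj (B q q) = y q"
  shows "vmul n (\<lambda>k. if k = p then xp else if k = q then xq else y k * inverse (qcnj (B k k))) (adj B) = y"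
proof
  fix k
  show "vmul n (\<lambda>k. if k = p then xp else if k = q then xq else y k * inverse (qcnj (B k k))) (adj B) k = y k"
    using assms by (auto simp: vmul_adj_pq_shaped Hvec_def mult.assoc)
qed

lemma image_vmul_adj_pq_line:
  assumes "pq_shaped n p q B" and "p \<in> A" and "q \<in> A" and "A \<subseteq> {1..n}" and "p \<noteq> q"
    and "\<forall>k\<in>{1..n}. k \<noteq> p \<and> k \<noteq> q \<longrightarrow> B k k \<noteq> 0"
  shows "(\<lambda>x. vmul n x (adj B)) ` (coord_subspace A \<inter> pq_line p q a b)
    = coord_subspace A \<inter> pq_line p q (a * qcnj (B p p) + b * qcnj (B p q)) (a * qcnj (B q p) + b * qcnj (B q q))"
    (is "?T ` _ = _ \<inter> pq_line p q ?a ?b")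
proof -
  have p: "p \<in> {1..n}" and q: "q \<in> {1..n}"
    using assms(2-4) by auto
  note T = vmul_adj_pq_shaped[OF assms(1) p q assms(5)]
  have lin: "c * a * qcnj (B p p) + c * b * qcnj (B p q) = c * ?a"
    "c * a * qcnj (B q p) + c * b * qcnj (B q q) = c * ?b" for c
    by (simp_all add: algebra_simps)
  show ?thesis
  proof (intro equalityI subsetI)
    fix y assume "y \<in> ?T ` (coord_subspace A \<inter> pq_line p q a b)"
    then obtain x c where x: "x \<in> coord_subspace A" "x p = c * a" "x q = c * b" and y: "y = ?T x"
      by (auto simp: pq_line_def)
    have "y \<in> coord_subspace A"
      using x assms(2,3) by (auto simp: y T coord_subspace_def)
    moreover have "y p = c * ?a" "y q = c * ?b"
      using x p q assms(5) lin by (simp_all add: y T)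
    ultimately show "y \<in> coord_subspace A \<inter> pq_line p q ?a ?b"
      by (auto simp: pq_line_def)
  next
    fix y assume y: "y \<in> coord_subspace A \<inter> pq_line p q ?a ?b"
    then obtain c where c: "y p = c * ?a" "y q = c * ?b"
      by (auto simp: pq_line_def)
    let ?x = "\<lambda>k. if k = p then c * a else if k = q then c * b else y k * inverse (qcnj (B k k))"
    have "y \<in> Hvec n"
      using y assms(4) by (auto simp: coord_subspace_def Hvec_def)
    then have "?T ?x = y"
      using c lin by (intro vmul_adj_pq_shaped_lift[OF assms(1) p q assms(5,6)]) simp_all
    moreover have "?x \<in> coord_subspace A"
      using y assms(2,3) by (auto simp: coord_subspace_def)
    moreover have "?x \<in> pq_line p q a b"
      using assms(5) by (auto simp: pq_line_def intro!: exI[of _ c])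
    ultimately show "y \<in> ?T ` (coord_subspace A \<inter> pq_line p q a b)"
      by (intro image_eqI[OF sym]) auto
  qed
qed

lemma image_vmul_adj_coord_subspace:
  assumes "pq_shaped n p q B" and "p \<in> {1..n}" and "q \<in> {1..n}" and "p \<noteq> q"
    and "\<forall>k\<in>{1..n}. k \<noteq> p \<and> k \<noteq> q \<longrightarrow> B k k \<noteq> 0"
    and "\<forall>yp yq. \<exists>xp xq. xp * qcnj (B p p) + xq * qcnj (B p q) = yp
      \<and> xp * qcnj (B q p) + xq * qcnj (B q q) = yq"
    and "A \<subseteq> {1..n}" and "p \<in> A \<longleftrightarrow> q \<in> A"
  shows "(\<lambda>x. vmul n x (adj B)) ` coord_subspace A = coord_subspace A"
    (is "?T ` _ = _")
proof (intro equalityI subsetI)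
  fix y assume "y \<in> ?T ` coord_subspace A"
  then obtain x where x: "x \<in> coord_subspace A" and y: "y = ?T x"
    by blast
  show "y \<in> coord_subspace A"
    using x assms(8) by (auto simp: y vmul_adj_pq_shaped[OF assms(1-4)] coord_subspace_def)
next
  fix y assume y: "y \<in> coord_subspace A"
  obtain xp xq where xpq: "xp * qcnj (B p p) + xq * qcnj (B p q) = y p"
      "xp * qcnj (B q p) + xq * qcnj (B q q) = y q" and zero: "p \<notin> A \<Longrightarrow> xp = 0 \<and> xq = 0"
  proof (cases "p \<in> A")
    case False
    then have "y p = 0" "y q = 0"
      using y assms(8) by (auto simp: coord_subspace_def)
    then show ?thesis
      using that[of 0 0] by simp
  qed (use assms(6) that in blast)
  let ?x = "\<lambda>k. if k = p then xp else if k = q then xq else y k * inverse (qcnj (B k k))"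
  have "y \<in> Hvec n"
    using y assms(7) by (auto simp: coord_subspace_def Hvec_def)
  then have "?T ?x = y"
    using xpq by (rule vmul_adj_pq_shaped_lift[OF assms(1-5)])
  moreover have "?x \<in> coord_subspace A"
    using y zero assms(8) by (auto simp: coord_subspace_def)
  ultimately show "y \<in> ?T ` coord_subspace A"
    by (rule image_eqI[OF sym])
qed

lemma Kpq_unitary:
  assumes "B \<in> Kpq n p q" and "p \<in> {1..n}" and "q \<in> {1..n}" and "p \<noteq> q"
  shows "\<forall>k\<in>{1..n}. k \<noteq> p \<and> k \<noteq> q \<longrightarrow> B k k * qcnj (B k k) = 1"
    and "B p p * qcnj (B p p) + B p q * qcnj (B p q) = 1"
    and "B q p * qcnj (B q p) + B q q * qcnj (B q q) = 1"
    and "B p p * qcnj (B q p) + B p q * qcnj (B q q) = 0"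
  using assms pq_shaped_in_Sp_iff[of n p q B] by (simp_all add: Kpq_iff)

lemma Kpq_diag_nonzero:
  assumes "B \<in> Kpq n p q" and "p \<in> {1..n}" and "q \<in> {1..n}" and "p \<noteq> q"
  shows "\<forall>k\<in>{1..n}. k \<noteq> p \<and> k \<noteq> q \<longrightarrow> B k k \<noteq> 0"
  using Kpq_unitary(1)[OF assms] by fastforce

lemma Kpq_block_surj:
  assumes "B \<in> Kpq n p q" and "p \<in> {1..n}" and "q \<in> {1..n}" and "p \<noteq> q"
  shows "\<forall>yp yq. \<exists>xp xq. xp * qcnj (B p p) + xq * qcnj (B p q) = yp
    \<and> xp * qcnj (B q p) + xq * qcnj (B q q) = yq"
proof (intro allI)
  fix yp yq
  note U = Kpq_unitary[OF assms]
  from U(4) have qp: "B q p * qcnj (B p p) + B q q * qcnj (B p q) = 0"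
    by (rule qcnj_orthogonal_sym)
  let ?xp = "yp * B p p + yq * B q p" and ?xq = "yp * B p q + yq * B q q"
  have "?xp * qcnj (B p p) + ?xq * qcnj (B p q)
      = yp * (B p p * qcnj (B p p) + B p q * qcnj (B p q)) + yq * (B q p * qcnj (B p p) + B q q * qcnj (B p q))"
    by (simp add: algebra_simps)
  moreover have "?xp * qcnj (B q p) + ?xq * qcnj (B q q)
      = yp * (B p p * qcnj (B q p) + B p q * qcnj (B q q)) + yq * (B q p * qcnj (B q p) + B q q * qcnj (B q q))"
    by (simp add: algebra_simps)
  ultimately show "\<exists>xp xq. xp * qcnj (B p p) + xq * qcnj (B p q) = yp
      \<and> xp * qcnj (B q p) + xq * qcnj (B q q) = yq"
    using U(2-4) qp by auto
qed

lemma Kpq_first_column_nonzero: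
  assumes "B \<in> Kpq n p q" and "p \<in> {1..n}" and "q \<in> {1..n}" and "p \<noteq> q"
  shows "B p p \<noteq> 0 \<or> B q p \<noteq> 0"
  using Kpq_unitary(2-4)[OF assms] by auto

definition pq_block :: "nat \<Rightarrow> nat \<Rightarrow> nat \<Rightarrow> quat \<Rightarrow> quat \<Rightarrow> quat \<Rightarrow> quat \<Rightarrow> qmat" where
  "pq_block n p q a b c d = (\<lambda>i j.
     if (i, j) = (p, p) then a else if (i, j) = (p, q) then b
     else if (i, j) = (q, p) then c else if (i, j) = (q, q) then d else idm n i j)"

lemma pq_block_in_Kpq:
  assumes "p \<in> {1..n}" and "q \<in> {1..n}" and "p \<noteq> q"
    and "a * qcnj a + b * qcnj b = 1" and "c * qcnj c + d * qcnj d = 1" and "a * qcnj c + b * qcnj d = 0"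
  shows "pq_block n p q a b c d \<in> Kpq n p q"
proof -
  have shaped: "pq_shaped n p q (pq_block n p q a b c d)"
    using assms(1-3) by (auto simp: pq_shaped_def is_qmat_def pq_block_def idm_def)
  have "pq_block n p q a b c d \<in> Sp n"
    unfolding pq_shaped_in_Sp_iff[OF shaped assms(1-3)]
    using assms by (auto simp: pq_block_def idm_def)
  with shaped show ?thesis
    by (simp add: Kpq_iff)
qed

lemma ex_Kpq_first_column:
  assumes "p \<in> {1..n}" and "q \<in> {1..n}" and "p \<noteq> q" and "a \<noteq> 0 \<or> b \<noteq> 0"
  shows "\<exists>B\<in>Kpq n p q. \<exists>s. s \<noteq> 0 \<and> qcnj (B p p) = s * a \<and> qcnj (B q p) = s * b"
proof (cases "a = 0")
  case True
  have "pq_block n p q 0 1 1 0 \<in> Kpq n p q"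
    using assms(1-3) by (rule pq_block_in_Kpq) simp_all
  moreover have "inverse b \<noteq> 0" "inverse b * b = 1"
    using True assms(4) by simp_all
  ultimately show ?thesis
    using True assms(3)
    by (auto simp: pq_block_def intro!: bexI[of _ "pq_block n p q 0 1 1 0"] exI[of _ "inverse b"])
next
  case False
  txt \<open>Normalise (a, b) to (1, u); the block sigma [[1, -u], [conj u, 1]] is then unitary.\<close>
  define u where "u = inverse a * b"
  define \<sigma> where "\<sigma> = 1 / sqrt (1 + qnorm u)"
  define r where "r = quat_of_real \<sigma>"
  have norm: "\<sigma>\<^sup>2 * (1 + qnorm u) = 1"
    using qnorm_nonneg[of u] by (simp add: \<sigma>_def power_divide)
  have "pq_block n p q r (- (r * u)) (r * qcnj u) r \<in> Kpq n p q"
    using assms(1-3)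
  proof (rule pq_block_in_Kpq)
    show "r * qcnj r + - (r * u) * qcnj (- (r * u)) = 1" "r * qcnj u * qcnj (r * qcnj u) + r * qcnj r = 1"
      using norm by (simp_all add: r_def quat_ops_defs qnorm_def power2_eq_square algebra_simps)
    show "r * qcnj (r * qcnj u) + - (r * u) * qcnj r = 0"
      by (simp add: r_def quat_ops_defs algebra_simps)
  qed
  moreover have "r \<noteq> 0"
    using qnorm_nonneg[of u] by (simp add: r_def \<sigma>_def)
  moreover have "r * inverse a * a = r" "r * inverse a * b = r * u"
    using False by (simp_all add: u_def mult.assoc)
  moreover have "qcnj (r * qcnj u) = r * u"
    by (simp add: qcnj_mult r_def quat_of_real_commute)
  ultimately show ?thesis
    using False assms(3)
    by (auto simp: pq_block_def r_def intro!: exI[of _ "r * inverse a"]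
        bexI[of _ "pq_block n p q r (- (r * u)) (r * qcnj u) r"])
qed

lemma Diag_in_Kgrp:
  assumes "\<forall>k\<in>{1..n}. \<gamma> k * qcnj (\<gamma> k) = 1"
  shows "Diag n \<gamma> \<in> Kgrp n"
proof -
  have "mmul n (Diag n \<gamma>) (adj (Diag n \<gamma>)) i j = idm n i j" for i j
  proof -
    have "mmul n (Diag n \<gamma>) (adj (Diag n \<gamma>)) i j
        = (\<Sum>k\<in>{1..n}. if k = i then (if i = j \<and> i \<in> {1..n} then \<gamma> i * qcnj (\<gamma> i) else 0) else 0)"
      unfolding mmul_def adj_def Diag_def by (rule sum.cong) auto
    then show ?thesis
      using assms by (auto simp: idm_def)
  qed
  then show ?thesis
    by (auto simp: Kgrp_def Sp_def is_qmat_def Diag_def fun_eq_iff)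
qed

section \<open>The flags of S_{w,pq}\<close>

locale pq_positions =
  fixes n :: nat and w :: "nat \<Rightarrow> nat" and i j p q :: nat
  assumes w_permutes: "w permutes {1..n}"
    and i: "i \<in> {1..n}" and j: "j \<in> {1..n}" and i_less_j: "i < j"
    and w_i: "w i = p" and w_j: "w j = q"
begin

lemma p: "p \<in> {1..n}" and q: "q \<in> {1..n}"
  using permutes_in_image[OF w_permutes] i j w_i w_j by blast+

lemma p_neq_q: "p \<noteq> q"
  using permutes_inj[OF w_permutes] w_i w_j i_less_j by (metis injD less_irrefl)

lemma image_w_subset: "\<nu> \<in> {1..n} \<Longrightarrow> w ` {1..\<nu>} \<subseteq> {1..n}"
  using image_mono[of "{1..\<nu>}" "{1..n}" w] permutes_image[OF w_permutes] by simp

lemma w_mem_image_iff: "k \<in> {1..n} \<Longrightarrow> w k \<in> w ` {1..\<nu>} \<longleftrightarrow> k \<le> \<nu>"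
  using inj_image_mem_iff[OF permutes_inj[OF w_permutes]] by simp

lemma p_mem_image_iff: "p \<in> w ` {1..\<nu>} \<longleftrightarrow> i \<le> \<nu>"
  using w_mem_image_iff[OF i] w_i by simp

lemma q_mem_image_iff: "q \<in> w ` {1..\<nu>} \<longleftrightarrow> j \<le> \<nu>"
  using w_mem_image_iff[OF j] w_j by simp

text \<open>The flag of S_{w,pq} corresponding to the point [a : b] of the quaternionic projective line.\<close>

definition pq_flag :: "quat \<Rightarrow> quat \<Rightarrow> qflag" where
  "pq_flag a b \<nu> =
    (if \<nu> \<notin> {1..n} then {}
     else if i \<le> \<nu> \<and> \<nu> < j then coord_subspace (insert q (w ` {1..\<nu>})) \<inter> pq_line p q a b
     else coord_subspace (w ` {1..\<nu>}))"

lemma pq_flag_outside: "\<nu> \<notin> {1..n} \<Longrightarrow> pq_flag a b \<nu> = {}"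
  by (simp add: pq_flag_def)

lemma pq_flag_inner:
  "\<nu> \<in> {1..n} \<Longrightarrow> i \<le> \<nu> \<Longrightarrow> \<nu> < j
    \<Longrightarrow> pq_flag a b \<nu> = coord_subspace (insert q (w ` {1..\<nu>})) \<inter> pq_line p q a b"
  by (simp add: pq_flag_def)

lemma pq_flag_outer:
  "\<nu> \<in> {1..n} \<Longrightarrow> \<not> (i \<le> \<nu> \<and> \<nu> < j) \<Longrightarrow> pq_flag a b \<nu> = coord_subspace (w ` {1..\<nu>})"
  by (auto simp: pq_flag_def)

lemma pq_flag_1_0: "pq_flag 1 0 = Fw n w"
proof
  fix \<nu>
  have inj: "inj_on w {1..\<nu>}"
    using inj_on_subset[OF permutes_inj[OF w_permutes] subset_UNIV] .
  show "pq_flag 1 0 \<nu> = Fw n w \<nu>"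
  proof (cases "\<nu> \<in> {1..n}")
    case nu: True
    show ?thesis
    proof (cases "i \<le> \<nu> \<and> \<nu> < j")
      case True
      then have "q \<notin> w ` {1..\<nu>}"
        using q_mem_image_iff[of \<nu>] by simp
      then have "coord_subspace (insert q (w ` {1..\<nu>})) \<inter> pq_line p q 1 0 = coord_subspace (w ` {1..\<nu>})"
        using p_neq_q by (auto simp: coord_subspace_def pq_line_def)
      then show ?thesis
        using True by (simp add: pq_flag_inner[OF nu] Fw_eq_coord_subspace[OF inj nu])
    next
      case False
      then show ?thesis
        by (simp add: pq_flag_outer[OF nu False] Fw_eq_coord_subspace[OF inj nu])
    qed
  qed (simp add: pq_flag_outside Fw_outside)
qed

lemma pq_flag_0_1: "pq_flag 0 1 = Fw n (transpose p q \<circ> w)"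
proof
  fix \<nu>
  have "(transpose p q \<circ> w) permutes {1..n}"
    using permutes_compose[OF w_permutes permutes_swap_id[OF p q]] .
  then have inj: "inj_on (transpose p q \<circ> w) {1..\<nu>}"
    using inj_on_subset[OF permutes_inj subset_UNIV] by blast
  have image: "(transpose p q \<circ> w) ` {1..\<nu>} = transpose p q ` w ` {1..\<nu>}"
    by (simp add: image_comp)
  show "pq_flag 0 1 \<nu> = Fw n (transpose p q \<circ> w) \<nu>"
  proof (cases "\<nu> \<in> {1..n}")
    case nu: True
    show ?thesis
    proof (cases "i \<le> \<nu> \<and> \<nu> < j")
      case True
      then have "p \<in> w ` {1..\<nu>}" "q \<notin> w ` {1..\<nu>}"
        using p_mem_image_iff[of \<nu>] q_mem_image_iff[of \<nu>] by simp_all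
      then have "(transpose p q \<circ> w) ` {1..\<nu>} = insert q (w ` {1..\<nu>} - {p})"
        unfolding image using p_neq_q by (auto simp: in_transpose_image_iff transpose_def)
      moreover have "coord_subspace (insert q (w ` {1..\<nu>})) \<inter> pq_line p q 0 1
          = coord_subspace (insert q (w ` {1..\<nu>} - {p}))"
        using p_neq_q by (auto simp: coord_subspace_def pq_line_def)
      ultimately show ?thesis
        using True by (simp add: pq_flag_inner[OF nu] Fw_eq_coord_subspace[OF inj nu])
    next
      case False
      then have "p \<in> w ` {1..\<nu>} \<longleftrightarrow> q \<in> w ` {1..\<nu>}"
        using i_less_j p_mem_image_iff[of \<nu>] q_mem_image_iff[of \<nu>] by auto
      then have "(transpose p q \<circ> w) ` {1..\<nu>} = w ` {1..\<nu>}"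
        unfolding image by (rule transpose_image_eq)
      then show ?thesis
        by (simp add: pq_flag_outer[OF nu False] Fw_eq_coord_subspace[OF inj nu])
    qed
  qed (simp add: pq_flag_outside Fw_outside)
qed

lemma pq_flag_scale: "t \<noteq> 0 \<Longrightarrow> pq_flag (t * a) (t * b) = pq_flag a b"
  by (simp add: pq_flag_def pq_line_scale fun_eq_iff)

lemma pq_flag_eqD:
  assumes "pq_flag a b = pq_flag a' b'"
  shows "\<exists>c. a' = c * a \<and> b' = c * b"
proof -
  let ?v = "\<lambda>k. if k = p then a' else if k = q then b' else 0"
  have "p \<in> w ` {1..i}"
    using i w_i by auto
  then have "?v \<in> coord_subspace (insert q (w ` {1..i})) \<inter> pq_line p q a' b'"
    using p_neq_q by (auto simp: coord_subspace_def pq_line_def intro!: exI[of _ 1])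
  moreover have "pq_flag a b i = pq_flag a' b' i"
    using assms by simp
  ultimately have "?v \<in> pq_line p q a b"
    using pq_flag_inner[OF i order.refl i_less_j] by blast
  then show ?thesis
    using p_neq_q by (simp add: pq_line_def)
qed

lemma flag_act_pq_flag:
  assumes "pq_shaped n p q B"
    and "\<forall>k\<in>{1..n}. k \<noteq> p \<and> k \<noteq> q \<longrightarrow> B k k \<noteq> 0"
    and "\<forall>yp yq. \<exists>xp xq. xp * qcnj (B p p) + xq * qcnj (B p q) = yp
      \<and> xp * qcnj (B q p) + xq * qcnj (B q q) = yq"
  shows "flag_act n B (pq_flag a b)
    = pq_flag (a * qcnj (B p p) + b * qcnj (B p q)) (a * qcnj (B q p) + b * qcnj (B q q))"
proof
  fix \<nu>
  show "flag_act n B (pq_flag a b) \<nu>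
      = pq_flag (a * qcnj (B p p) + b * qcnj (B p q)) (a * qcnj (B q p) + b * qcnj (B q q)) \<nu>"
  proof (cases "\<nu> \<in> {1..n}")
    case nu: True
    show ?thesis
    proof (cases "i \<le> \<nu> \<and> \<nu> < j")
      case True
      then have "p \<in> w ` {1..\<nu>}"
        using p_mem_image_iff[of \<nu>] by simp
      then show ?thesis
        using True image_w_subset[OF nu] q p_neq_q assms(1,2)
        by (simp add: flag_act_def pq_flag_inner[OF nu] image_vmul_adj_pq_line)
    next
      case False
      then have "p \<in> w ` {1..\<nu>} \<longleftrightarrow> q \<in> w ` {1..\<nu>}"
        using i_less_j p_mem_image_iff[of \<nu>] q_mem_image_iff[of \<nu>] by auto
      then show ?thesis
        using image_w_subset[OF nu] p q p_neq_q assms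
        by (simp add: flag_act_def pq_flag_outer[OF nu False] image_vmul_adj_coord_subspace)
    qed
  qed (simp add: flag_act_def pq_flag_outside)
qed

lemma flag_act_Kpq:
  assumes "B \<in> Kpq n p q"
  shows "flag_act n B (pq_flag a b)
    = pq_flag (a * qcnj (B p p) + b * qcnj (B p q)) (a * qcnj (B q p) + b * qcnj (B q q))"
  using assms Kpq_diag_nonzero[OF assms p q p_neq_q] Kpq_block_surj[OF assms p q p_neq_q]
  by (intro flag_act_pq_flag) (simp_all add: Kpq_iff)

lemma flag_act_Diag:
  assumes "\<forall>\<nu>\<in>{1..n}. \<gamma> \<nu> \<noteq> 0"
  shows "flag_act n (Diag n \<gamma>) (pq_flag a b) = pq_flag (a * qcnj (\<gamma> p)) (b * qcnj (\<gamma> q))"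
proof -
  have entries: "Diag n \<gamma> p p = \<gamma> p" "Diag n \<gamma> q q = \<gamma> q" "Diag n \<gamma> p q = 0" "Diag n \<gamma> q p = 0"
    "\<forall>k\<in>{1..n}. Diag n \<gamma> k k = \<gamma> k"
    using p q p_neq_q by (simp_all add: Diag_def)
  have "qcnj (\<gamma> p) \<noteq> 0" "qcnj (\<gamma> q) \<noteq> 0"
    using assms p q by simp_all
  then have "yp * inverse (qcnj (\<gamma> p)) * qcnj (\<gamma> p) = yp \<and> yq * inverse (qcnj (\<gamma> q)) * qcnj (\<gamma> q) = yq"
    for yp yq by (simp add: mult.assoc)
  then have "\<forall>yp yq. \<exists>xp xq. xp * qcnj (\<gamma> p) + xq * qcnj 0 = yp \<and> xp * qcnj 0 + xq * qcnj (\<gamma> q) = yq"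
    by auto
  then show ?thesis
    using flag_act_pq_flag[OF pq_shaped_Diag, of \<gamma> a b] assms entries by simp
qed

lemma Swpq_eq: "Swpq n w p q = {pq_flag a b | a b. a \<noteq> 0 \<or> b \<noteq> 0}"
proof (intro equalityI subsetI)
  fix F assume "F \<in> Swpq n w p q"
  then obtain B where B: "B \<in> Kpq n p q" and F: "F = flag_act n B (pq_flag 1 0)"
    by (auto simp: Swpq_def pq_flag_1_0)
  then have "F = pq_flag (qcnj (B p p)) (qcnj (B q p))"
    by (simp add: flag_act_Kpq)
  moreover have "qcnj (B p p) \<noteq> 0 \<or> qcnj (B q p) \<noteq> 0"
    using Kpq_first_column_nonzero[OF B p q p_neq_q] by simp
  ultimately show "F \<in> {pq_flag a b | a b. a \<noteq> 0 \<or> b \<noteq> 0}"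
    by blast
next
  fix F assume "F \<in> {pq_flag a b | a b. a \<noteq> 0 \<or> b \<noteq> 0}"
  then obtain a b where ab: "a \<noteq> 0 \<or> b \<noteq> 0" and F: "F = pq_flag a b"
    by blast
  obtain B s where B: "B \<in> Kpq n p q" and "s \<noteq> 0" "qcnj (B p p) = s * a" "qcnj (B q p) = s * b"
    using ex_Kpq_first_column[OF p q p_neq_q ab] by blast
  then have "flag_act n B (Fw n w) = F"
    by (simp add: F flag_act_Kpq pq_flag_scale flip: pq_flag_1_0)
  with B show "F \<in> Swpq n w p q"
    unfolding Swpq_def by blast
qed

lemma pq_flag_in_Swpq: "a \<noteq> 0 \<or> b \<noteq> 0 \<Longrightarrow> pq_flag a b \<in> Swpq n w p q"
  unfolding Swpq_eq by blast

lemma pq_flag_a_0: "a \<noteq> 0 \<Longrightarrow> pq_flag a 0 = pq_flag 1 0"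
  using pq_flag_scale[of a 1 0] by simp

lemma pq_flag_0_b: "b \<noteq> 0 \<Longrightarrow> pq_flag 0 b = pq_flag 0 1"
  using pq_flag_scale[of b 0 1] by simp

lemma pq_flag_eq_1_0D: "pq_flag a b = pq_flag 1 0 \<Longrightarrow> b = 0"
  using pq_flag_eqD[of a b 1 0] by (metis mult_zero_left no_zero_divisors zero_neq_one)

lemma pq_flag_eq_0_1D: "pq_flag a b = pq_flag 0 1 \<Longrightarrow> a = 0"
  using pq_flag_eqD[of a b 0 1] by (metis mult_zero_left no_zero_divisors zero_neq_one)

lemma Swpq_minus_eq:
  "Swpq n w p q - {Fw n w, Fw n (transpose p q \<circ> w)} = {pq_flag a b | a b. a \<noteq> 0 \<and> b \<noteq> 0}"
proof (intro equalityI subsetI)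
  fix F assume "F \<in> Swpq n w p q - {Fw n w, Fw n (transpose p q \<circ> w)}"
  then obtain a b where F: "F = pq_flag a b" and "a \<noteq> 0 \<or> b \<noteq> 0"
    and "F \<noteq> pq_flag 1 0" "F \<noteq> pq_flag 0 1"
    by (auto simp: Swpq_eq pq_flag_1_0 pq_flag_0_1)
  then have "a \<noteq> 0" "b \<noteq> 0"
    using pq_flag_a_0 pq_flag_0_b by blast+
  with F show "F \<in> {pq_flag a b | a b. a \<noteq> 0 \<and> b \<noteq> 0}"
    by blast
next
  fix F assume "F \<in> {pq_flag a b | a b. a \<noteq> 0 \<and> b \<noteq> 0}"
  then obtain a b where F: "F = pq_flag a b" and "a \<noteq> 0" "b \<noteq> 0"
    by blast
  then have "F \<noteq> pq_flag 1 0" "F \<noteq> pq_flag 0 1" "F \<in> Swpq n w p q"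
    using pq_flag_eq_1_0D pq_flag_eq_0_1D by (auto simp: Swpq_eq)
  then show "F \<in> Swpq n w p q - {Fw n w, Fw n (transpose p q \<circ> w)}"
    by (simp add: pq_flag_1_0 pq_flag_0_1)
qed

lemma Kgrp_fixes_Fw:
  assumes "B \<in> Kgrp n"
  shows "flag_act n B (Fw n w) = Fw n w" and "flag_act n B (Fw n (transpose p q \<circ> w)) = Fw n (transpose p q \<circ> w)"
proof -
  have B: "B \<in> Kpq n p q" and off: "B p q = 0" "B q p = 0"
    using assms p_neq_q by (auto simp: Kgrp_def Kpq_def)
  then have "B p p \<noteq> 0" "B q q \<noteq> 0"
    using Kpq_unitary(2,3)[OF B p q p_neq_q] by auto
  moreover have "flag_act n B (pq_flag 1 0) = pq_flag (qcnj (B p p)) 0"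
    "flag_act n B (pq_flag 0 1) = pq_flag 0 (qcnj (B q q))"
    using off by (simp_all add: flag_act_Kpq[OF B])
  ultimately show "flag_act n B (Fw n w) = Fw n w"
    "flag_act n B (Fw n (transpose p q \<circ> w)) = Fw n (transpose p q \<circ> w)"
    unfolding pq_flag_1_0[symmetric] pq_flag_0_1[symmetric]
    using pq_flag_a_0[of "qcnj (B p p)"] pq_flag_0_b[of "qcnj (B q q)"] by simp_all
qed

lemma Kgrp_fixed_points:
  "{F \<in> Swpq n w p q. \<forall>B\<in>Kgrp n. flag_act n B F = F} = {Fw n w, Fw n (transpose p q \<circ> w)}"
proof (intro equalityI subsetI)
  fix F assume F: "F \<in> {F \<in> Swpq n w p q. \<forall>B\<in>Kgrp n. flag_act n B F = F}"
  show "F \<in> {Fw n w, Fw n (transpose p q \<circ> w)}"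
  proof (rule ccontr)
    assume "F \<notin> {Fw n w, Fw n (transpose p q \<circ> w)}"
    then obtain a b where ab: "a \<noteq> 0" "b \<noteq> 0" and F_eq: "F = pq_flag a b"
      using F Swpq_minus_eq by blast
    let ?R = "Diag n (\<lambda>k. if k = q then - 1 else 1)"
    have "?R \<in> Kgrp n"
      by (rule Diag_in_Kgrp) (simp add: qcnj_minus)
    then have "pq_flag a b = pq_flag a (- b)"
      using F flag_act_Diag[of "\<lambda>k. if k = q then - 1 else 1" a b] p_neq_q
      by (simp add: F_eq qcnj_minus)
    then obtain c where c: "a = c * a" "- b = c * b"
      using pq_flag_eqD by blast
    then have "(c - 1) * a = 0"
      by (simp add: algebra_simps)
    with ab(1) have "c = 1"
      by simp
    with c(2) ab(2) show False
      by (simp add: eq_commute[of "- b"] quat_eq_uminus_iff)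
  qed
next
  fix F assume F: "F \<in> {Fw n w, Fw n (transpose p q \<circ> w)}"
  have "pq_flag 1 0 \<in> Swpq n w p q" "pq_flag 0 1 \<in> Swpq n w p q"
    using pq_flag_in_Swpq[of 1 0] pq_flag_in_Swpq[of 0 1] by simp_all
  then have "F \<in> Swpq n w p q"
    using F unfolding pq_flag_1_0 pq_flag_0_1 by blast
  moreover have "\<forall>B\<in>Kgrp n. flag_act n B F = F"
    using F Kgrp_fixes_Fw by blast
  ultimately show "F \<in> {F \<in> Swpq n w p q. \<forall>B\<in>Kgrp n. flag_act n B F = F}"
    by blast
qed

lemma Ggrp_preserves_complement:
  assumes "g \<in> Ggrp n" and "F \<in> Swpq n w p q - {Fw n w, Fw n (transpose p q \<circ> w)}"
  shows "flag_act n g F \<in> Swpq n w p q - {Fw n w, Fw n (transpose p q \<circ> w)}"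
proof -
  obtain \<gamma> where g: "g = Diag n \<gamma>" and \<gamma>: "\<forall>\<nu>\<in>{1..n}. \<gamma> \<nu> \<noteq> 0"
    using assms(1) by (auto simp: Ggrp_def)
  obtain a b where "a \<noteq> 0" "b \<noteq> 0" and F: "F = pq_flag a b"
    using assms(2) by (auto simp: Swpq_minus_eq)
  moreover have "\<gamma> p \<noteq> 0" "\<gamma> q \<noteq> 0"
    using \<gamma> p q by blast+
  ultimately have "a * qcnj (\<gamma> p) \<noteq> 0" "b * qcnj (\<gamma> q) \<noteq> 0"
    by simp_all
  then show ?thesis
    unfolding Swpq_minus_eq g F flag_act_Diag[OF \<gamma>] by blast
qed

lemma Ggrp_transitive_on_complement:
  assumes "F1 \<in> Swpq n w p q - {Fw n w, Fw n (transpose p q \<circ> w)}"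
    and "F2 \<in> Swpq n w p q - {Fw n w, Fw n (transpose p q \<circ> w)}"
  shows "\<exists>g\<in>Ggrp n. flag_act n g F1 = F2"
proof -
  obtain a1 b1 where ab1: "a1 \<noteq> 0" "b1 \<noteq> 0" and F1: "F1 = pq_flag a1 b1"
    using assms(1) by (auto simp: Swpq_minus_eq)
  obtain a2 b2 where ab2: "a2 \<noteq> 0" "b2 \<noteq> 0" and F2: "F2 = pq_flag a2 b2"
    using assms(2) by (auto simp: Swpq_minus_eq)
  define \<gamma> where
    "\<gamma> k = (if k = p then qcnj (inverse a1 * a2) else if k = q then qcnj (inverse b1 * b2) else 1)" for k
  have \<gamma>: "\<forall>\<nu>\<in>{1..n}. \<gamma> \<nu> \<noteq> 0"
    using ab1 ab2 by (simp add: \<gamma>_def)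
  have "a1 * qcnj (\<gamma> p) = a2" "b1 * qcnj (\<gamma> q) = b2"
    using ab1 p_neq_q by (simp_all add: \<gamma>_def flip: mult.assoc)
  then have "flag_act n (Diag n \<gamma>) F1 = F2"
    by (simp add: F1 F2 flag_act_Diag[OF \<gamma>])
  moreover have "Diag n \<gamma> \<in> Ggrp n"
    using \<gamma> by (auto simp: Ggrp_def)
  ultimately show ?thesis
    by blast
qed

lemma Ggrp_stabilizer:
  "\<exists>F\<in>Swpq n w p q - {Fw n w, Fw n (transpose p q \<circ> w)}. {g \<in> Ggrp n. flag_act n g F = F} = Gpq n p q"
proof (rule bexI[of _ "pq_flag 1 1"])
  show "pq_flag 1 1 \<in> Swpq n w p q - {Fw n w, Fw n (transpose p q \<circ> w)}"
    unfolding Swpq_minus_eq by (intro CollectI exI[of _ 1]) simp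
next
  show "{g \<in> Ggrp n. flag_act n g (pq_flag 1 1) = pq_flag 1 1} = Gpq n p q"
  proof (intro equalityI subsetI)
    fix g assume "g \<in> {g \<in> Ggrp n. flag_act n g (pq_flag 1 1) = pq_flag 1 1}"
    then obtain \<gamma> where g: "g = Diag n \<gamma>" and \<gamma>: "\<forall>\<nu>\<in>{1..n}. \<gamma> \<nu> \<noteq> 0"
      and "pq_flag (qcnj (\<gamma> p)) (qcnj (\<gamma> q)) = pq_flag 1 1"
      by (auto simp: Ggrp_def flag_act_Diag)
    then obtain c where "c * qcnj (\<gamma> p) = 1" "c * qcnj (\<gamma> q) = 1"
      using pq_flag_eqD by metis
    then have "qcnj (\<gamma> p) = qcnj (\<gamma> q)"
      using inverse_unique by metis
    then have "\<gamma> p = \<gamma> q"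
      by (metis qcnj_qcnj)
    with g \<gamma> show "g \<in> Gpq n p q"
      by (auto simp: Gpq_def)
  next
    fix g assume "g \<in> Gpq n p q"
    then obtain \<gamma> where g: "g = Diag n \<gamma>" and \<gamma>: "\<forall>\<nu>\<in>{1..n}. \<gamma> \<nu> \<noteq> 0" and "\<gamma> p = \<gamma> q"
      by (auto simp: Gpq_def)
    moreover have "qcnj (\<gamma> q) \<noteq> 0"
      using \<gamma> q by simp
    ultimately have "flag_act n g (pq_flag 1 1) = pq_flag 1 1"
      using pq_flag_scale[of "qcnj (\<gamma> q)" 1 1] by (simp add: flag_act_Diag)
    moreover have "g \<in> Ggrp n"
      using g \<gamma> by (auto simp: Ggrp_def)
    ultimately show "g \<in> {g \<in> Ggrp n. flag_act n g (pq_flag 1 1) = pq_flag 1 1}"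
      by blast
  qed
qed

end

lemma Kpq_commute: "Kpq n q p = Kpq n p q"
  unfolding Kpq_def by blast

lemma Gpq_commute: "Gpq n q p = Gpq n p q"
  unfolding Gpq_def by metis

lemma Swpq_commute: "Swpq n w q p = Swpq n w p q"
  by (simp only: Swpq_def Kpq_commute)

theorem lemma3p3:
  fixes n p q :: nat and w :: "nat \<Rightarrow> nat"
  assumes "w permutes {1..n}" and "1 \<le> p" and "p < q" and "q \<le> n"
  defines "S \<equiv> Swpq n w p q"
  defines "C \<equiv> S - {Fw n w, Fw n (transpose p q \<circ> w)}"
  shows "{F \<in> S. \<forall>B\<in>Kgrp n. flag_act n B F = F} = {Fw n w, Fw n (transpose p q \<circ> w)}
     \<and> (\<forall>g\<in>Ggrp n. \<forall>F\<in>C. flag_act n g F \<in> C)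
     \<and> (\<forall>F1\<in>C. \<forall>F2\<in>C. \<exists>g\<in>Ggrp n. flag_act n g F1 = F2)
     \<and> (\<exists>F\<in>C. {g \<in> Ggrp n. flag_act n g F = F} = Gpq n p q)"
proof -
  txt \<open>The locale requires w^-1(p) < w^-1(q); in the other case p and q change roles.\<close>
  have "p \<in> w ` {1..n}" "q \<in> w ` {1..n}"
    using assms(2-4) permutes_image[OF assms(1)] by simp_all
  then obtain i j where i: "i \<in> {1..n}" "w i = p" and j: "j \<in> {1..n}" "w j = q"
    by blast
  then consider "i < j" | "j < i"
    using assms(3) by (metis linorder_neqE_nat less_irrefl)
  then show ?thesis
  proof cases
    case 1
    interpret pq_positions n w i j p q
      using assms(1) i j 1 by unfold_locales
    show ?thesis
      unfolding C_def S_def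
      by (intro conjI ballI Kgrp_fixed_points Ggrp_preserves_complement Ggrp_transitive_on_complement
          Ggrp_stabilizer) assumption+
  next
    case 2
    interpret pq_positions n w j i q p
      using assms(1) i j 2 by unfold_locales
    note swap = Swpq_commute[of n w q p] Gpq_commute[of n q p] transpose_commute[of q p]
    show ?thesis
      unfolding C_def S_def
      by (intro conjI ballI Kgrp_fixed_points[unfolded swap] Ggrp_preserves_complement[unfolded swap]
          Ggrp_transitive_on_complement[unfolded swap]
          Ggrp_stabilizer[unfolded swap]) assumption+
  qed
qed

end
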